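(* Let $\mathcal{P}=(\Xi,\Omega,(\mathcal{M},d),\Lambda)$ be an SCI problem with countable $\Lambda=\{f_n\}_{n\in\mathbb{N}}$ satisfying consistency, let $\delta_\mathcal{M}$ be a representation of $\mathcal{M}$, and let $\mathcal{R}$ be a class of partial functionals $\subseteq\mathbb{N}^\mathbb{N}\to\mathbb{N}^\mathbb{N}$ with the following $\lim$-normal-form property: for every single-valued problem $f$ between represented spaces and every $k\in\mathbb{N}_0$, $f\le_{\mathrm W}^{\mathcal{R}}\lim^{(k)}$ holds if and only if there exists $K\in\mathcal{R}$ with $\lim^{(k)}\circ K\preceq f$. Then $\mathrm{SCI}_{A,\mathcal{R}}(\mathcal{P})=\mathrm{rank}_{\mathcal{R}}(\widehat\Xi)$.
   Context: Consistency: $\Xi(A)\neq\Xi(B)$ implies $f(A)\neq f(B)$ for some $f\in\Lambda$. $\mathrm{Ev}_\Lambda(A):=(f_n(A))_{n}\in\mathbb{C}^\mathbb{N}$, $I_\Lambda:=\mathrm{Ev}_\Lambda(\Omega)$ carries the subspace representation $\delta_{I_\Lambda}$ of the product of Cauchy representations of $\mathbb{C}$; $\widehat\Xi:I_\Lambda\to\mathcal{M}$ is the unique map with $\widehat\Xi\circ\mathrm{Ev}_\Lambda=\Xi$, viewed as a single-valued map $(I_\Lambda,\delta_{I_\Lambda})\to(\mathcal{M},\delta_\mathcal{M})$. $\lim$ is the limit operator on Baire space ($\lim(p)(k)=\lim_n p(\langle n,k\rangle)$, defined when each such sequence is eventually constant), $\lim^{(0)}=\mathrm{id}$, $\lim^{(k+1)}=\lim\circ\lim^{(k)}$.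 For a single-valued $f:\subseteq X\to Y$ between represented spaces, $\lim^{(k)}\circ K\preceq f$ means: for every name $p\in\mathrm{dom}(\delta_X)$ of a point $x\in\mathrm{dom}(f)$, $K(p)\in\mathrm{dom}(\lim^{(k)})$ and $\delta_Y(\lim^{(k)}(K(p)))=f(x)$. $f\le_{\mathrm W}^{\mathcal{R}}g$ means there exist $H,K\in\mathcal{R}$ such that for every realizer $G$ of $g$, $p\mapsto K(\langle p,G(H(p))\rangle)$ realizes $f$. $\mathrm{rank}_{\mathcal{R}}(f):=\min\{k\in\mathbb{N}_0:f\le_{\mathrm W}^{\mathcal{R}}\lim^{(k)}\}$ (or $\infty$). $\mathcal{P}$ has a pure $\mathcal{R}$-$\lim$-tower of height $k$ if there exists $K\in\mathcal{R}$ with $\lim^{(k)}\circ K\preceq\widehat\Xi$; $\mathrm{SCI}_{A,\mathcal{R}}(\mathcal{P})$ is the least such $k$, or $\infty$. *)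

theory Defs
  imports "HOL-Analysis.Analysis" "HOL-Library.Countable" "HOL-Library.Nat_Bijection"
    "HOL-Library.Extended_Nat"
begin

type_synonym baire = "nat \<Rightarrow> nat"
type_synonym pfun = "baire \<Rightarrow> baire option"

definition bpair :: "baire \<Rightarrow> baire \<Rightarrow> baire" where
  "bpair p q = (\<lambda>n. if even n then p (n div 2) else q (n div 2))"

definition lim_op :: pfun where
  "lim_op p = (if (\<forall>k. \<exists>N. \<forall>n\<ge>N. p (prod_encode (n, k)) = p (prod_encode (N, k)))
     then Some (\<lambda>k. THE v. \<exists>N. \<forall>n\<ge>N. p (prod_encode (n, k)) = v) else None)"

fun lim_iter :: "nat \<Rightarrow> pfun" where
  "lim_iter 0 p = Some p"
| "lim_iter (Suc k) p = Option.bind (lim_iter k p) lim_op"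

definition is_representation :: "(baire \<Rightarrow> 'a option) \<Rightarrow> 'a set \<Rightarrow> bool" where
  "is_representation \<delta> X \<longleftrightarrow> (\<forall>p x. \<delta> p = Some x \<longrightarrow> x \<in> X) \<and> (\<forall>x\<in>X. \<exists>p. \<delta> p = Some x)"

text \<open>A single-valued problem f :\<subseteq> X \<rightarrow> Y between the represented spaces
  (range of \<delta>X, \<delta>X) and (range of \<delta>Y, \<delta>Y).\<close>
definition sv_problem :: "(baire \<Rightarrow> 'a option) \<Rightarrow> (baire \<Rightarrow> 'b option) \<Rightarrow> ('a \<Rightarrow> 'b option) \<Rightarrow> bool" where
  "sv_problem \<delta>X \<delta>Y f \<longleftrightarrow>
     (\<forall>x y. f x = Some y \<longrightarrow> (\<exists>p. \<delta>X p = Some x) \<and> (\<exists>q. \<delta>Y q = Some y))"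

definition realizes :: "(baire \<Rightarrow> 'a option) \<Rightarrow> (baire \<Rightarrow> 'b option) \<Rightarrow> ('a \<Rightarrow> 'b option) \<Rightarrow> pfun \<Rightarrow> bool" where
  "realizes \<delta>X \<delta>Y f F \<longleftrightarrow>
     (\<forall>p x y. \<delta>X p = Some x \<longrightarrow> f x = Some y \<longrightarrow> (\<exists>q. F p = Some q \<and> \<delta>Y q = Some y))"

definition realizes_baire :: "pfun \<Rightarrow> pfun \<Rightarrow> bool" where
  "realizes_baire g G \<longleftrightarrow> (\<forall>p q. g p = Some q \<longrightarrow> G p = Some q)"

definition weihrauch_le :: "pfun set \<Rightarrow> (baire \<Rightarrow> 'a option) \<Rightarrow> (baire \<Rightarrow> 'b option)
    \<Rightarrow> ('a \<Rightarrow> 'b option) \<Rightarrow> pfun \<Rightarrow> bool" where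
  "weihrauch_le R \<delta>X \<delta>Y f g \<longleftrightarrow>
     (\<exists>H\<in>R. \<exists>K\<in>R. \<forall>G. realizes_baire g G \<longrightarrow>
        realizes \<delta>X \<delta>Y f
          (\<lambda>p. Option.bind (H p) (\<lambda>h. Option.bind (G h) (\<lambda>gh. K (bpair p gh)))))"

definition lim_tower :: "nat \<Rightarrow> pfun \<Rightarrow> (baire \<Rightarrow> 'a option) \<Rightarrow> (baire \<Rightarrow> 'b option)
    \<Rightarrow> ('a \<Rightarrow> 'b option) \<Rightarrow> bool" where
  "lim_tower k K \<delta>X \<delta>Y f \<longleftrightarrow>
     (\<forall>p x y. \<delta>X p = Some x \<longrightarrow> f x = Some y \<longrightarrow>
        (\<exists>q r. K p = Some q \<and> lim_iter k q = Some r \<and> \<delta>Y r = Some y))"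

definition rank_R :: "pfun set \<Rightarrow> (baire \<Rightarrow> 'a option) \<Rightarrow> (baire \<Rightarrow> 'b option)
    \<Rightarrow> ('a \<Rightarrow> 'b option) \<Rightarrow> enat" where
  "rank_R R \<delta>X \<delta>Y f = (if \<exists>k. weihrauch_le R \<delta>X \<delta>Y f (lim_iter k)
     then enat (LEAST k. weihrauch_le R \<delta>X \<delta>Y f (lim_iter k)) else \<infinity>)"

text \<open>Cauchy representation of \<complex>: a name is a sequence of (codes of) Gaussian rationals
  q_n with |q_n - z| \<le> 2^-n.\<close>
definition gauss_rat :: "nat \<Rightarrow> complex" where
  "gauss_rat n = Complex (of_rat (nat_to_rat_surj (fst (prod_decode n))))
                         (of_rat (nat_to_rat_surj (snd (prod_decode n))))"

definition cauchy_names :: "baire \<Rightarrow> complex \<Rightarrow> bool" where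
  "cauchy_names p z \<longleftrightarrow> (\<forall>n. cmod (gauss_rat (p n) - z) \<le> (1/2) ^ n)"

definition delta_C :: "baire \<Rightarrow> complex option" where
  "delta_C p = (if \<exists>z. cauchy_names p z then Some (THE z. cauchy_names p z) else None)"

definition delta_prod :: "baire \<Rightarrow> (nat \<Rightarrow> complex) option" where
  "delta_prod p = (if \<forall>i. delta_C (\<lambda>n. p (prod_encode (i, n))) \<noteq> None
     then Some (\<lambda>i. the (delta_C (\<lambda>n. p (prod_encode (i, n))))) else None)"

definition Ev :: "(nat \<Rightarrow> 'o \<Rightarrow> complex) \<Rightarrow> 'o \<Rightarrow> nat \<Rightarrow> complex" where
  "Ev fs A = (\<lambda>n. fs n A)"

definition I_Lambda :: "(nat \<Rightarrow> 'o \<Rightarrow> complex) \<Rightarrow> 'o set \<Rightarrow> (nat \<Rightarrow> complex) set" where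
  "I_Lambda fs \<Omega> = Ev fs ` \<Omega>"

definition delta_I :: "(nat \<Rightarrow> 'o \<Rightarrow> complex) \<Rightarrow> 'o set \<Rightarrow> baire \<Rightarrow> (nat \<Rightarrow> complex) option" where
  "delta_I fs \<Omega> p = (case delta_prod p of Some x \<Rightarrow> if x \<in> I_Lambda fs \<Omega> then Some x else None
                                       | None \<Rightarrow> None)"

definition Xi_hat :: "('o \<Rightarrow> 'm) \<Rightarrow> 'o set \<Rightarrow> (nat \<Rightarrow> 'o \<Rightarrow> complex) \<Rightarrow> (nat \<Rightarrow> complex) \<Rightarrow> 'm option" where
  "Xi_hat \<Xi> \<Omega> fs x = (if x \<in> I_Lambda fs \<Omega> then Some (\<Xi> (SOME A. A \<in> \<Omega> \<and> Ev fs A = x)) else None)"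

definition consistent :: "('o \<Rightarrow> 'm) \<Rightarrow> 'o set \<Rightarrow> (nat \<Rightarrow> 'o \<Rightarrow> complex) \<Rightarrow> bool" where
  "consistent \<Xi> \<Omega> fs \<longleftrightarrow> (\<forall>A\<in>\<Omega>. \<forall>B\<in>\<Omega>. \<Xi> A \<noteq> \<Xi> B \<longrightarrow> (\<exists>n. fs n A \<noteq> fs n B))"

definition metric_on :: "'m set \<Rightarrow> ('m \<Rightarrow> 'm \<Rightarrow> real) \<Rightarrow> bool" where
  "metric_on M d \<longleftrightarrow> (\<forall>x\<in>M. \<forall>y\<in>M. (d x y = 0 \<longleftrightarrow> x = y) \<and> d x y = d y x \<and> 0 \<le> d x y)
     \<and> (\<forall>x\<in>M. \<forall>y\<in>M. \<forall>z\<in>M. d x z \<le> d x y + d y z)"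

definition SCI_A :: "pfun set \<Rightarrow> ('o \<Rightarrow> 'm) \<Rightarrow> 'o set \<Rightarrow> (nat \<Rightarrow> 'o \<Rightarrow> complex)
    \<Rightarrow> (baire \<Rightarrow> 'm option) \<Rightarrow> enat" where
  "SCI_A R \<Xi> \<Omega> fs \<delta>M = (if \<exists>k. \<exists>K\<in>R. lim_tower k K (delta_I fs \<Omega>) \<delta>M (Xi_hat \<Xi> \<Omega> fs)
     then enat (LEAST k. \<exists>K\<in>R. lim_tower k K (delta_I fs \<Omega>) \<delta>M (Xi_hat \<Xi> \<Omega> fs)) else \<infinity>)"

end

theory Submission
  imports Defs
begin

text \<open>Both sides are least indices: \<open>SCI_A\<close> minimises over the heights \<open>k\<close> of pure
  \<open>lim\<close>-towers for \<open>Xi_hat\<close>, \<open>rank_R\<close> over the \<open>k\<close> such that \<open>Xi_hat\<close> Weihrauch-reduces to \<open>lim_iter k\<close>.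
  The normal-form hypothesis makes the two predicates coincide for every \<open>k\<close>, provided
  \<open>Xi_hat\<close> is a single-valued problem between represented spaces. That amounts to two
  facts: every point of \<open>I_\<Lambda>\<close> has a name, because the Cauchy representation of \<open>\<complex>\<close>
  (and hence of \<open>\<complex>\<^sup>\<nat>\<close>) is surjective by density of the Gaussian rationals, and every value
  of \<open>Xi_hat\<close> lies in \<open>M\<close>, which \<open>\<delta>M\<close> represents.\<close>

lemma exists_rat_near:
  fixes x e :: real
  assumes "e > 0"
  shows "\<exists>a. \<bar>x - of_rat a\<bar> \<le> e"
proof -
  obtain r where "r \<in> \<rat>" "x < r" "r < x + e"
    using Rats_dense_in_real[of x "x + e"] assms by auto
  then obtain a where "r = of_rat a" by (auto elim: Rats_cases)
  with \<open>x < r\<close> \<open>r < x + e\<close> show ?thesis by (intro exI[of _ a]) auto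
qed

lemma gauss_rat_dense:
  fixes z :: complex and e :: real
  assumes "e > 0"
  shows "\<exists>m. cmod (gauss_rat m - z) \<le> e"
proof -
  obtain a where a: "\<bar>Re z - of_rat a\<bar> \<le> e / 2" using exists_rat_near[of "e / 2"] assms by auto
  obtain b where b: "\<bar>Im z - of_rat b\<bar> \<le> e / 2" using exists_rat_near[of "e / 2"] assms by auto
  obtain i j where "a = nat_to_rat_surj i" "b = nat_to_rat_surj j"
    using surj_nat_to_rat_surj by (metis surjD)
  then have g: "gauss_rat (prod_encode (i, j)) = Complex (of_rat a) (of_rat b)"
    by (simp add: gauss_rat_def)
  have "cmod (gauss_rat (prod_encode (i, j)) - z)
      \<le> \<bar>Re (gauss_rat (prod_encode (i, j)) - z)\<bar> + \<bar>Im (gauss_rat (prod_encode (i, j)) - z)\<bar>"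
    by (rule cmod_le)
  also have "\<dots> \<le> e" using a b by (simp add: g abs_minus_commute)
  finally show ?thesis by blast
qed

lemma cauchy_names_unique:
  assumes "cauchy_names p z" "cauchy_names p w"
  shows "z = w"
proof (rule ccontr)
  assume "z \<noteq> w"
  then obtain n where n: "(1/2::real) ^ n < cmod (z - w) / 2"
    using real_arch_pow_inv[of "cmod (z - w) / 2" "1/2"] by auto
  have "cmod (z - w) \<le> cmod (gauss_rat (p n) - w) + cmod (gauss_rat (p n) - z)"
    using norm_triangle_ineq4[of "gauss_rat (p n) - w" "gauss_rat (p n) - z"] by simp
  also have "\<dots> \<le> 2 * (1/2) ^ n"
    using assms unfolding cauchy_names_def by (smt (verit))
  finally show False using n by simp
qed

lemma delta_C_surj: "\<exists>p. delta_C p = Some z"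
proof -
  have "\<forall>n. \<exists>m. cmod (gauss_rat m - z) \<le> (1/2) ^ n" using gauss_rat_dense by simp
  then obtain p where "cauchy_names p z" unfolding cauchy_names_def by metis
  moreover from this have "(THE w. cauchy_names p w) = z" using cauchy_names_unique by blast
  ultimately show ?thesis by (auto simp: delta_C_def)
qed

lemma delta_prod_surj: "\<exists>p. delta_prod p = Some x"
proof -
  have "\<forall>i. \<exists>q. delta_C q = Some (x i)" using delta_C_surj by blast
  then obtain P where P: "\<And>i. delta_C (P i) = Some (x i)" by metis
  define p where "p m = (case prod_decode m of (i, n) \<Rightarrow> P i n)" for m
  have "(\<lambda>n. p (prod_encode (i, n))) = P i" for i by (simp add: p_def)
  with P show ?thesis by (intro exI[of _ p]) (simp add: delta_prod_def)
qed

lemma delta_I_surj: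
  assumes "x \<in> I_Lambda fs \<Omega>"
  shows "\<exists>p. delta_I fs \<Omega> p = Some x"
proof -
  obtain p where "delta_prod p = Some x" using delta_prod_surj by blast
  with assms show ?thesis by (intro exI[of _ p]) (simp add: delta_I_def)
qed

lemma Xi_hat_in_codomain:
  assumes "\<forall>A\<in>\<Omega>. \<Xi> A \<in> M" and "Xi_hat \<Xi> \<Omega> fs x = Some y"
  shows "y \<in> M"
proof -
  from assms(2) have "x \<in> I_Lambda fs \<Omega>" and y: "y = \<Xi> (SOME A. A \<in> \<Omega> \<and> Ev fs A = x)"
    by (auto simp: Xi_hat_def split: if_splits)
  then have "\<exists>A. A \<in> \<Omega> \<and> Ev fs A = x" by (auto simp: I_Lambda_def)
  then have "(SOME A. A \<in> \<Omega> \<and> Ev fs A = x) \<in> \<Omega>" by (metis (mono_tags, lifting) someI_ex)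
  with assms(1) y show ?thesis by simp
qed

lemma sv_problem_Xi_hat:
  assumes "\<forall>A\<in>\<Omega>. \<Xi> A \<in> M" and "is_representation \<delta>M M"
  shows "sv_problem (delta_I fs \<Omega>) \<delta>M (Xi_hat \<Xi> \<Omega> fs)"
  unfolding sv_problem_def
proof (intro allI impI conjI)
  fix x y
  assume xy: "Xi_hat \<Xi> \<Omega> fs x = Some y"
  then have "x \<in> I_Lambda fs \<Omega>" by (simp add: Xi_hat_def split: if_splits)
  then show "\<exists>p. delta_I fs \<Omega> p = Some x" by (rule delta_I_surj)
  from assms(1) xy have "y \<in> M" by (rule Xi_hat_in_codomain)
  with assms(2) show "\<exists>q. \<delta>M q = Some y" by (auto simp: is_representation_def)
qed

theorem mainTheorem16:
  fixes \<Xi> :: "'o \<Rightarrow> 'm" and \<Omega> :: "'o set" and M :: "'m set" and d :: "'m \<Rightarrow> 'm \<Rightarrow> real"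
    and fs :: "nat \<Rightarrow> 'o \<Rightarrow> complex" and \<delta>M :: "baire \<Rightarrow> 'm option" and R :: "pfun set"
  assumes "\<forall>A\<in>\<Omega>. \<Xi> A \<in> M"
    and "metric_on M d"
    and "consistent \<Xi> \<Omega> fs"
    and "is_representation \<delta>M M"
    and normal_form: "\<forall>(\<delta>X :: baire \<Rightarrow> (nat \<Rightarrow> complex) option) (\<delta>Y :: baire \<Rightarrow> 'm option) f k.
       sv_problem \<delta>X \<delta>Y f \<longrightarrow>
       (weihrauch_le R \<delta>X \<delta>Y f (lim_iter k) \<longleftrightarrow> (\<exists>K\<in>R. lim_tower k K \<delta>X \<delta>Y f))"
  shows "SCI_A R \<Xi> \<Omega> fs \<delta>M = rank_R R (delta_I fs \<Omega>) \<delta>M (Xi_hat \<Xi> \<Omega> fs)"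
proof -
  have "sv_problem (delta_I fs \<Omega>) \<delta>M (Xi_hat \<Xi> \<Omega> fs)"
    using assms(1,4) by (rule sv_problem_Xi_hat)
  with normal_form have "\<And>k. weihrauch_le R (delta_I fs \<Omega>) \<delta>M (Xi_hat \<Xi> \<Omega> fs) (lim_iter k)
      \<longleftrightarrow> (\<exists>K\<in>R. lim_tower k K (delta_I fs \<Omega>) \<delta>M (Xi_hat \<Xi> \<Omega> fs))"
    by blast
  then show ?thesis unfolding SCI_A_def rank_R_def by simp
qed

end
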